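(* Suppose the density $f$ is symmetric about $\mu$, i.e. $f(x)=f(2\mu-x)$ for all $x$, and that the misplacement probabilities satisfy $\alpha_{d_j,d_h}=\alpha_{d_{n-j+1},d_{n-h+1}}$ for all $j,h=1,\dots,n$. Let $\hat f_{\text{PROS}}$ be the kernel density estimator based on a $\text{PROS}_{\boldsymbol{\alpha}}(n,L,s,D)$ sample of size $N=nL$ from $f$, and define $$\hat{f}^*_{\text{PROS}}(x,\mu)=\tfrac12\big(\hat{f}_{\text{PROS}}(x)+\hat{f}_{\text{PROS}}(2\mu-x)\big).$$ Then (i) $\mathbb{E}[\hat{f}^*_{\text{PROS}}(x,\mu)]=\mathbb{E}[\hat{f}_{\text{PROS}}(x)]$, and (ii) $\mathrm{var}(\hat{f}^*_{\text{PROS}}(x,\mu))\le\mathrm{var}(\hat{f}_{\text{PROS}}(x))$.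
   Context: Let $f$ be a density with cdf $F$. Fix positive integers $s,n,L$ with $m=s/n$ an integer and $d_j=\{(j-1)m+1,\dots,jm\}$. Let $\boldsymbol{\alpha}=(\alpha_{d_j,d_h})$ be an $n\times n$ doubly stochastic matrix of misplacement probabilities. $f_{(u:s)}(x)=\frac{s!}{(u-1)!(s-u)!}F(x)^{u-1}(1-F(x))^{s-u}f(x)$ and $f_{[d_j]}(x)=\frac1m\sum_{h=1}^n\sum_{u\in d_h}\alpha_{d_j,d_h}f_{(u:s)}(x)$. A $\text{PROS}_{\boldsymbol{\alpha}}(n,L,s,D)$ sample is a family of independent $X_{[d_j]i}$ ($j\le n$, $i\le L$) with $X_{[d_j]i}\sim f_{[d_j]}$. With $K$ a symmetric second-order kernel ($\int K=1$, $\int K^2<\infty$, $\int x^2K<\infty$) and bandwidth $h>0$, $\hat{f}_{\text{PROS}}(x)=\frac{1}{nLh}\sum_{i=1}^L\sum_{j=1}^nK\big(\frac{x-X_{[d_j]i}}{h}\big)$. *)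

theory Defs
  imports "HOL-Probability.Probability"
begin

definition ord_stat_density :: "nat \<Rightarrow> nat \<Rightarrow> (real \<Rightarrow> real) \<Rightarrow> (real \<Rightarrow> real) \<Rightarrow> real \<Rightarrow> real" where
  "ord_stat_density s u F f x =
     fact s / (fact (u - 1) * fact (s - u)) * F x ^ (u - 1) * (1 - F x) ^ (s - u) * f x"

definition block :: "nat \<Rightarrow> nat \<Rightarrow> nat \<Rightarrow> nat set" where
  "block s n j = {(j - 1) * (s div n) + 1 .. j * (s div n)}"

definition pros_density :: "nat \<Rightarrow> nat \<Rightarrow> (nat \<Rightarrow> nat \<Rightarrow> real) \<Rightarrow> (real \<Rightarrow> real) \<Rightarrow> (real \<Rightarrow> real)
    \<Rightarrow> nat \<Rightarrow> real \<Rightarrow> real" where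
  "pros_density s n \<alpha> F f j x =
     (1 / real (s div n)) * (\<Sum>h\<in>{1..n}. \<Sum>u\<in>block s n h. \<alpha> j h * ord_stat_density s u F f x)"

definition doubly_stochastic :: "nat \<Rightarrow> (nat \<Rightarrow> nat \<Rightarrow> real) \<Rightarrow> bool" where
  "doubly_stochastic n \<alpha> \<longleftrightarrow>
     (\<forall>j\<in>{1..n}. \<forall>h\<in>{1..n}. 0 \<le> \<alpha> j h) \<and>
     (\<forall>j\<in>{1..n}. (\<Sum>h\<in>{1..n}. \<alpha> j h) = 1) \<and>
     (\<forall>h\<in>{1..n}. (\<Sum>j\<in>{1..n}. \<alpha> j h) = 1)"

definition pros_kde :: "nat \<Rightarrow> nat \<Rightarrow> real \<Rightarrow> (real \<Rightarrow> real) \<Rightarrow> (nat \<Rightarrow> nat \<Rightarrow> 'a \<Rightarrow> real)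
    \<Rightarrow> real \<Rightarrow> 'a \<Rightarrow> real" where
  "pros_kde n L h K X x \<omega> =
     (1 / (real n * real L * h)) * (\<Sum>i\<in>{1..L}. \<Sum>j\<in>{1..n}. K ((x - X j i \<omega>) / h))"

definition pros_kde_sym :: "nat \<Rightarrow> nat \<Rightarrow> real \<Rightarrow> (real \<Rightarrow> real) \<Rightarrow> (nat \<Rightarrow> nat \<Rightarrow> 'a \<Rightarrow> real)
    \<Rightarrow> real \<Rightarrow> real \<Rightarrow> 'a \<Rightarrow> real" where
  "pros_kde_sym n L h K X x \<mu> \<omega> =
     (pros_kde n L h K X x \<omega> + pros_kde n L h K X (2 * \<mu> - x) \<omega>) / 2"

end

theory Submission
  imports Defs
begin

text \<open>
  The reflection \<open>t \<mapsto> 2\<mu> - t\<close> carries the density of the \<open>u\<close>-th order statistic of the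
  symmetric \<open>f\<close> to that of the \<open>(s - u + 1)\<close>-th, hence the block \<open>d j\<close> to \<open>d (n - j + 1)\<close>; by the
  symmetry of \<open>\<alpha>\<close> the PROS density of row \<open>j\<close> is carried to that of row \<open>n - j + 1\<close>. By
  independence the reflected sample is therefore a relabelling of the original one in law, and
  since \<open>K\<close> is even the estimator at \<open>2\<mu> - x\<close> has the same law as the estimator at \<open>x\<close>. Averaging
  two equidistributed variables keeps the mean and, by convexity of the square, cannot increase
  the variance.
\<close>

lemma cdf_reflect:
  fixes f F :: "real \<Rightarrow> real"
  assumes f_meas: "f \<in> borel_measurable borel"
    and f_int: "integrable lborel f" "integral\<^sup>L lborel f = 1"
    and F_def: "\<And>t. F t = (LINT y:{..t}|lborel. f y)"
    and f_sym: "\<And>t. f t = f (2 * \<mu> - t)"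
  shows "F (2 * \<mu> - t) = 1 - F t"
proof -
  have f_lower: "integrable lborel (\<lambda>y. f y * indicator {..t} y)"
    using f_int by (intro integrable_real_mult_indicator) auto
  have reflected: "AE y in lborel.
      indicator {..2*\<mu>-t} (2*\<mu> + (-1) * y) * f (2*\<mu> + (-1) * y) = f y - f y * indicator {..t} y"
    using AE_lborel_singleton[of t]
    by eventually_elim (use f_sym in \<open>auto simp: indicator_def\<close>)
  have "F (2 * \<mu> - t) = (\<integral>y. indicator {..2*\<mu>-t} y * f y \<partial>lborel)"
    by (simp add: F_def set_lebesgue_integral_def)
  also have "\<dots> = \<bar>-1\<bar> *\<^sub>R (\<integral>y. indicator {..2*\<mu>-t} (2*\<mu> + (-1) * y) * f (2*\<mu> + (-1) * y) \<partial>lborel)"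
    by (rule lborel_integral_real_affine) simp
  also have "\<dots> = (\<integral>y. f y - f y * indicator {..t} y \<partial>lborel)"
    using reflected f_meas by (simp, intro integral_cong_AE) auto
  also have "\<dots> = 1 - F t"
    using f_int f_lower by (simp add: F_def set_lebesgue_integral_def mult.commute)
  finally show ?thesis .
qed

lemma ord_stat_density_reflect:
  assumes F_refl: "\<And>t. F (2 * \<mu> - t) = 1 - F t" and f_sym: "\<And>t. f t = f (2 * \<mu> - t)"
    and u: "1 \<le> u" "u \<le> s"
  shows "ord_stat_density s u F f (2 * \<mu> - t) = ord_stat_density s (s - u + 1) F f t"
proof -
  have "s - u + 1 - 1 = s - u" and "s - (s - u + 1) = u - 1"
    using u by auto
  then show ?thesis
    unfolding ord_stat_density_def F_refl using f_sym[of t] by (simp add: algebra_simps)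
qed

lemma block_subset:
  assumes "n dvd s" "h \<le> n"
  shows "block s n h \<subseteq> {1..s}"
proof -
  have "h * (s div n) \<le> s"
    using assms by (metis dvd_mult_div_cancel mult_le_mono1)
  then show ?thesis
    unfolding block_def by auto
qed

lemma bij_betw_reflect_interval:
  fixes a b c :: nat
  assumes "a + m = b" "b \<le> c"
  shows "bij_betw (\<lambda>u. c - u + 1) {a + 1..b} {c - b + 1..c - b + m}"
  by (rule bij_betw_byWitness[where f'="\<lambda>u. c - u + 1"]) (use assms in auto)

lemma bij_betw_block_reflect:
  assumes "n dvd s" "h \<in> {1..n}"
  shows "bij_betw (\<lambda>u. s - u + 1) (block s n h) (block s n (n - h + 1))"
proof -
  obtain m where s: "s = n * m"
    using assms by blast
  have m: "s div n = m"
    using assms s by simp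
  have "(h - 1) * m + m = h * m" "h * m \<le> n * m"
    using assms by (auto simp: algebra_simps intro: mult_le_mono1)
  from bij_betw_reflect_interval[OF this]
  have "bij_betw (\<lambda>u. s - u + 1) {(h - 1) * m + 1..h * m} {n * m - h * m + 1..n * m - h * m + m}"
    by (simp add: s)
  moreover have "(n - h + 1 - 1) * m = n * m - h * m" "(n - h + 1) * m = n * m - h * m + m"
    using assms by (auto simp: diff_mult_distrib algebra_simps intro!: le_add_diff_inverse2 mult_le_mono1)
  ultimately show ?thesis
    unfolding block_def m by (simp add: add.commute)
qed

lemma pros_density_reflect:
  assumes F_refl: "\<And>t. F (2 * \<mu> - t) = 1 - F t" and f_sym: "\<And>t. f t = f (2 * \<mu> - t)"
    and n: "n dvd s"
    and \<alpha>_sym: "\<And>j k. j \<in> {1..n} \<Longrightarrow> k \<in> {1..n} \<Longrightarrow> \<alpha> j k = \<alpha> (n - j + 1) (n - k + 1)"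
    and j: "j \<in> {1..n}"
  shows "pros_density s n \<alpha> F f j (2 * \<mu> - t) = pros_density s n \<alpha> F f (n - j + 1) t"
proof -
  let ?g = "\<lambda>h u. \<alpha> (n - j + 1) h * ord_stat_density s u F f t"
  have block_sum: "(\<Sum>u\<in>block s n h. \<alpha> j h * ord_stat_density s u F f (2 * \<mu> - t))
      = (\<Sum>u\<in>block s n (n - h + 1). ?g (n - h + 1) u)" if h: "h \<in> {1..n}" for h
  proof -
    have "(\<Sum>u\<in>block s n h. \<alpha> j h * ord_stat_density s u F f (2 * \<mu> - t))
        = (\<Sum>u\<in>block s n h. ?g (n - h + 1) (s - u + 1))"
    proof (rule sum.cong[OF refl])
      fix u
      assume "u \<in> block s n h"
      then have "1 \<le> u" "u \<le> s"
        using block_subset[OF n, of h] h by auto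
      then show "\<alpha> j h * ord_stat_density s u F f (2 * \<mu> - t) = ?g (n - h + 1) (s - u + 1)"
        using ord_stat_density_reflect[where F=F and f=f and \<mu>=\<mu>, OF F_refl f_sym] \<alpha>_sym[OF j h]
        by simp
    qed
    also have "\<dots> = (\<Sum>u\<in>block s n (n - h + 1). ?g (n - h + 1) u)"
      using sum.reindex_bij_betw[OF bij_betw_block_reflect[OF n h]] by simp
    finally show ?thesis .
  qed
  have "bij_betw (\<lambda>h. n - h + 1) {1..n} {1..n}"
    by (rule bij_betw_byWitness[where f'="\<lambda>h. n - h + 1"]) auto
  from sum.reindex_bij_betw[OF this, of "\<lambda>h. \<Sum>u\<in>block s n h. ?g h u"]
  show ?thesis
    unfolding pros_density_def by (simp add: block_sum)
qed

lemma distr_reflect_eq_distributed: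
  fixes Y Y' :: "'a \<Rightarrow> real"
  assumes Y: "distributed M lborel Y (\<lambda>t. ennreal (g t))"
    and Y': "distributed M lborel Y' (\<lambda>t. ennreal (g' t))"
    and g_reflect: "\<And>t. g' t = g (c - t)"
  shows "distr M borel (\<lambda>\<omega>. c - Y \<omega>) = distr M borel Y'"
proof -
  have [measurable]: "Y \<in> borel_measurable M" "(\<lambda>t. ennreal (g t)) \<in> borel_measurable borel"
    using Y by (simp_all add: distributed_def)
  have [measurable]: "(\<lambda>t. ennreal (g' t)) \<in> borel_measurable borel"
    using Y' by (simp add: distributed_def)
  have law_Y: "distr M borel Y = density lborel (\<lambda>t. ennreal (g t))"
    using Y unfolding distributed_def by (metis distr_cong sets_lborel)
  have law_Y': "distr M borel Y' = density lborel (\<lambda>t. ennreal (g' t))"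
    using Y' unfolding distributed_def by (metis distr_cong sets_lborel)
  have "distr M borel (\<lambda>\<omega>. c - Y \<omega>) = distr (density lborel (\<lambda>t. ennreal (g t))) borel (\<lambda>t. c - t)"
    unfolding law_Y[symmetric] by (subst distr_distr) (auto simp: comp_def)
  also have "\<dots> = density lborel (\<lambda>t. ennreal (g' t))"
  proof (rule measure_eqI)
    fix A :: "real set"
    assume "A \<in> sets (distr (density lborel (\<lambda>t. ennreal (g t))) borel (\<lambda>t. c - t))"
    then have A: "A \<in> sets borel"
      by simp
    have [measurable]: "(\<lambda>t. c - t) -` A \<in> sets borel"
      using measurable_sets[OF _ A, of "\<lambda>t. c - t" borel] by simp
    have "emeasure (distr (density lborel (\<lambda>t. ennreal (g t))) borel (\<lambda>t. c - t)) A
        = emeasure (density lborel (\<lambda>t. ennreal (g t))) ((\<lambda>t. c - t) -` A)"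
      using A by (subst emeasure_distr) auto
    also have "\<dots> = (\<integral>\<^sup>+y. ennreal (g y) * indicator ((\<lambda>t. c - t) -` A) y \<partial>lborel)"
      by (subst emeasure_density) auto
    also have "\<dots> = (\<integral>\<^sup>+y. ennreal (g y) * indicator A (c + (-1) * y) \<partial>lborel)"
      by (auto intro!: nn_integral_cong split: split_indicator)
    also have "\<dots> = (\<integral>\<^sup>+y. ennreal (g' y) * indicator A y \<partial>lborel)"
    proof -
      have "(\<lambda>y. ennreal (g' y) * indicator A y) \<in> borel_measurable borel"
        using A by measurable
      from nn_integral_real_affine[OF this, of "-1" c] show ?thesis
        by (simp add: g_reflect)
    qed
    finally show "emeasure (distr (density lborel (\<lambda>t. ennreal (g t))) borel (\<lambda>t. c - t)) A
        = emeasure (density lborel (\<lambda>t. ennreal (g' t))) A"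
      using A by (simp add: emeasure_density)
  qed simp
  finally show ?thesis
    using law_Y' by simp
qed

lemma (in prob_space) indep_vars_distr_PiM_reflect:
  fixes Z :: "'i \<Rightarrow> 'a \<Rightarrow> real"
  assumes I: "I \<noteq> {}"
    and ind: "indep_vars (\<lambda>_. borel) Z I"
    and \<sigma>_bij: "bij_betw \<sigma> I I"
    and reflect: "\<And>p. p \<in> I \<Longrightarrow> distr M borel (\<lambda>\<omega>. c - Z p \<omega>) = distr M borel (Z (\<sigma> p))"
  shows "distr M (PiM I (\<lambda>_. borel)) (\<lambda>\<omega>. \<lambda>p\<in>I. c - Z p \<omega>)
       = distr M (PiM I (\<lambda>_. borel)) (\<lambda>\<omega>. \<lambda>p\<in>I. Z (\<sigma> p) \<omega>)"
proof -
  have \<sigma>: "inj_on \<sigma> I" "\<sigma> \<in> I \<rightarrow> I"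
    using \<sigma>_bij by (auto simp: bij_betw_def)
  have rv: "\<And>p. p \<in> I \<Longrightarrow> Z p \<in> borel_measurable M"
    using ind by (auto simp: indep_vars_def)
  have ind_reflected: "indep_vars (\<lambda>_. borel) (\<lambda>p \<omega>. c - Z p \<omega>) I"
    by (rule indep_vars_compose2[OF ind]) auto
  have law_Z: "distr M (PiM I (\<lambda>_. borel)) (\<lambda>\<omega>. \<lambda>p\<in>I. Z p \<omega>) = PiM I (\<lambda>p. distr M borel (Z p))"
    using indep_vars_iff_distr_eq_PiM'[OF I, where M'="\<lambda>_. borel" and X=Z] ind rv by auto
  have vector: "(\<lambda>\<omega>. \<lambda>p\<in>I. Z p \<omega>) \<in> measurable M (PiM I (\<lambda>_. borel))"
    by (rule measurable_restrict) (use rv in auto)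
  have reindex: "(\<lambda>w. \<lambda>p\<in>I. w (\<sigma> p)) \<in> measurable (PiM I (\<lambda>_. borel)) (PiM I (\<lambda>_. borel))"
    by (rule measurable_restrict) (use \<sigma> in \<open>auto intro!: measurable_component_singleton\<close>)
  have "distr M (PiM I (\<lambda>_. borel)) (\<lambda>\<omega>. \<lambda>p\<in>I. c - Z p \<omega>) = PiM I (\<lambda>p. distr M borel (\<lambda>\<omega>. c - Z p \<omega>))"
    using indep_vars_iff_distr_eq_PiM'[OF I, where M'="\<lambda>_. borel" and X="\<lambda>p \<omega>. c - Z p \<omega>"]
      ind_reflected rv by auto
  also have "\<dots> = PiM I (\<lambda>p. distr M borel (Z (\<sigma> p)))"
    by (rule PiM_cong) (auto simp: reflect)
  also have "\<dots> = distr (PiM I (\<lambda>p. distr M borel (Z p))) (PiM I (\<lambda>p. distr M borel (Z (\<sigma> p))))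
      (\<lambda>w. \<lambda>p\<in>I. w (\<sigma> p))"
    by (rule distr_PiM_reindex[symmetric]) (auto intro!: prob_space_distr rv \<sigma>)
  also have "\<dots> = distr (distr M (PiM I (\<lambda>_. borel)) (\<lambda>\<omega>. \<lambda>p\<in>I. Z p \<omega>)) (PiM I (\<lambda>_. borel))
      (\<lambda>w. \<lambda>p\<in>I. w (\<sigma> p))"
    unfolding law_Z by (intro distr_cong) (auto intro!: sets_PiM_cong)
  also have "\<dots> = distr M (PiM I (\<lambda>_. borel)) (\<lambda>\<omega>. \<lambda>p\<in>I. Z (\<sigma> p) \<omega>)"
    using \<sigma> by (subst distr_distr[OF reindex vector]) (auto intro!: distr_cong
        simp: restrict_def fun_eq_iff Pi_iff)
  finally show ?thesis .
qed

lemma distr_eq_compose: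
  assumes "distr M N A = distr M N B" "A \<in> measurable M N" "B \<in> measurable M N"
    and "\<phi> \<in> measurable N P"
  shows "distr M P (\<lambda>\<omega>. \<phi> (A \<omega>)) = distr M P (\<lambda>\<omega>. \<phi> (B \<omega>))"
  using assms distr_distr[of \<phi> N P A M] distr_distr[of \<phi> N P B M] by (simp add: comp_def)

lemma (in prob_space) distr_kernel_sum_reflect:
  fixes Z :: "'i \<Rightarrow> 'a \<Rightarrow> real" and K :: "real \<Rightarrow> real"
  assumes I: "I \<noteq> {}"
    and ind: "indep_vars (\<lambda>_. borel) Z I"
    and \<sigma>: "bij_betw \<sigma> I I"
    and reflect: "\<And>p. p \<in> I \<Longrightarrow> distr M borel (\<lambda>\<omega>. 2 * \<mu> - Z p \<omega>) = distr M borel (Z (\<sigma> p))"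
    and K_meas: "K \<in> borel_measurable borel" and K_sym: "\<And>u. K (- u) = K u"
  shows "distr M borel (\<lambda>\<omega>. \<Sum>p\<in>I. K ((2 * \<mu> - x - Z p \<omega>) / h))
       = distr M borel (\<lambda>\<omega>. \<Sum>p\<in>I. K ((x - Z p \<omega>) / h))"
proof -
  note [measurable] = K_meas
  define G where "G w = (\<Sum>p\<in>I. K ((x - w p) / h))" for w :: "'i \<Rightarrow> real"
  have rv[measurable]: "\<And>p. p \<in> I \<Longrightarrow> Z p \<in> borel_measurable M"
    using ind by (auto simp: indep_vars_def)
  have \<sigma>_into: "\<sigma> \<in> I \<rightarrow> I"
    using \<sigma> by (auto simp: bij_betw_def)
  have G_reflect: "(\<Sum>p\<in>I. K ((2 * \<mu> - x - Z p \<omega>) / h)) = G (\<lambda>p\<in>I. 2 * \<mu> - Z p \<omega>)" for \<omega>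
    unfolding G_def by (intro sum.cong refl) (metis K_sym minus_diff_eq minus_divide_left diff_diff_eq2
        diff_diff_eq restrict_apply)
  have G_perm: "(\<Sum>p\<in>I. K ((x - Z p \<omega>) / h)) = G (\<lambda>p\<in>I. Z (\<sigma> p) \<omega>)" for \<omega>
    unfolding G_def using sum.reindex_bij_betw[OF \<sigma>, of "\<lambda>p. K ((x - Z p \<omega>) / h)"] by simp
  have [measurable]: "G \<in> borel_measurable (PiM I (\<lambda>_. borel))"
    unfolding G_def by measurable
  have [measurable]: "(\<lambda>\<omega>. \<lambda>p\<in>I. Z (\<sigma> p) \<omega>) \<in> measurable M (PiM I (\<lambda>_. borel))"
    by (intro measurable_restrict rv) (use \<sigma>_into in auto)
  have "distr M (PiM I (\<lambda>_. borel)) (\<lambda>\<omega>. \<lambda>p\<in>I. 2 * \<mu> - Z p \<omega>)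
      = distr M (PiM I (\<lambda>_. borel)) (\<lambda>\<omega>. \<lambda>p\<in>I. Z (\<sigma> p) \<omega>)"
    by (rule indep_vars_distr_PiM_reflect[OF I ind \<sigma> reflect])
  then show ?thesis
    unfolding G_reflect G_perm by (rule distr_eq_compose) measurable
qed

lemma pros_kde_eq_sum_pairs:
  "pros_kde n L h K X x \<omega>
     = 1 / (real n * real L * h) * (\<Sum>p\<in>{1..n} \<times> {1..L}. K ((x - X (fst p) (snd p) \<omega>) / h))"
  unfolding pros_kde_def by (subst sum.swap) (simp add: sum.cartesian_product split_def)

lemma abs_mult_le_sum_squares: "\<bar>a * b\<bar> \<le> a\<^sup>2 + (b::real)\<^sup>2"
proof -
  have "2 * (\<bar>a\<bar> * \<bar>b\<bar>) \<le> a\<^sup>2 + b\<^sup>2"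
    using sum_squares_bound[of "\<bar>a\<bar>" "\<bar>b\<bar>"] by (simp add: mult.assoc)
  moreover have "0 \<le> \<bar>a\<bar> * \<bar>b\<bar>"
    by simp
  ultimately show ?thesis
    unfolding abs_mult by linarith
qed

lemma integrable_square_sum:
  fixes g :: "'i \<Rightarrow> 'a \<Rightarrow> real"
  assumes meas: "\<And>p. p \<in> I \<Longrightarrow> g p \<in> borel_measurable M"
    and sq: "\<And>p. p \<in> I \<Longrightarrow> integrable M (\<lambda>\<omega>. (g p \<omega>)\<^sup>2)"
  shows "integrable M (\<lambda>\<omega>. (\<Sum>p\<in>I. g p \<omega>)\<^sup>2)"
proof -
  have product: "integrable M (\<lambda>\<omega>. g p \<omega> * g q \<omega>)" if "p \<in> I" "q \<in> I" for p q
  proof (rule Bochner_Integration.integrable_bound)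
    show "integrable M (\<lambda>\<omega>. (g p \<omega>)\<^sup>2 + (g q \<omega>)\<^sup>2)"
      using sq that by auto
    show "(\<lambda>\<omega>. g p \<omega> * g q \<omega>) \<in> borel_measurable M"
      using meas that by measurable
    show "AE \<omega> in M. norm (g p \<omega> * g q \<omega>) \<le> norm ((g p \<omega>)\<^sup>2 + (g q \<omega>)\<^sup>2)"
      using abs_mult_le_sum_squares by (intro AE_I2) (auto intro: order_trans)
  qed
  have "(\<lambda>\<omega>. (\<Sum>p\<in>I. g p \<omega>)\<^sup>2) = (\<lambda>\<omega>. \<Sum>p\<in>I. \<Sum>q\<in>I. g p \<omega> * g q \<omega>)"
    by (simp add: power2_eq_square sum_product)
  then show ?thesis
    using product by simp
qed

lemma (in prob_space) expectation_variance_average_of_equidistributed: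
  fixes A B :: "'a \<Rightarrow> real"
  assumes A: "A \<in> borel_measurable M" and B: "B \<in> borel_measurable M"
    and AB: "distr M borel A = distr M borel B"
    and A_sq: "integrable M (\<lambda>\<omega>. (A \<omega>)\<^sup>2)"
  shows "expectation (\<lambda>\<omega>. (A \<omega> + B \<omega>) / 2) = expectation A"
    and "expectation (\<lambda>\<omega>. ((A \<omega> + B \<omega>) / 2 - expectation (\<lambda>\<omega>. (A \<omega> + B \<omega>) / 2))\<^sup>2)
         \<le> expectation (\<lambda>\<omega>. (A \<omega> - expectation A)\<^sup>2)"
proof -
  have transfer: "integrable M (\<lambda>\<omega>. \<phi> (B \<omega>)) = integrable M (\<lambda>\<omega>. \<phi> (A \<omega>))"
      "expectation (\<lambda>\<omega>. \<phi> (B \<omega>)) = expectation (\<lambda>\<omega>. \<phi> (A \<omega>))"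
    if "\<phi> \<in> borel_measurable borel" for \<phi> :: "real \<Rightarrow> real"
    using integrable_distr_eq[OF A that] integrable_distr_eq[OF B that]
      integral_distr[OF A that] integral_distr[OF B that] AB by simp_all
  define m where "m = expectation A"
  have A_int: "integrable M A"
    using A A_sq by (rule square_integrable_imp_integrable)
  have A_var: "integrable M (\<lambda>\<omega>. (A \<omega> - m)\<^sup>2)"
    using A_int A_sq by (simp add: power2_diff)
  have B_int: "integrable M B" and B_mean: "expectation B = m"
    using transfer[of "\<lambda>t. t"] A_int by (simp_all add: m_def)
  have B_var: "integrable M (\<lambda>\<omega>. (B \<omega> - m)\<^sup>2)"
    and B_var_eq: "expectation (\<lambda>\<omega>. (B \<omega> - m)\<^sup>2) = expectation (\<lambda>\<omega>. (A \<omega> - m)\<^sup>2)"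
    using transfer[of "\<lambda>t. (t - m)\<^sup>2"] A_var by simp_all
  show mean: "expectation (\<lambda>\<omega>. (A \<omega> + B \<omega>) / 2) = expectation A"
    using A_int B_int B_mean by (simp add: m_def)
  have convex: "((a + b) / 2 - m)\<^sup>2 \<le> ((a - m)\<^sup>2 + (b - m)\<^sup>2) / 2" for a b :: real
    using zero_le_power2[of "a - b"] by (simp add: power2_eq_square field_simps)
  have avg_var: "integrable M (\<lambda>\<omega>. ((A \<omega> + B \<omega>) / 2 - m)\<^sup>2)"
    by (rule Bochner_Integration.integrable_bound[where f="\<lambda>\<omega>. ((A \<omega> - m)\<^sup>2 + (B \<omega> - m)\<^sup>2) / 2"])
       (use A_var B_var A B convex in auto)
  have "expectation (\<lambda>\<omega>. ((A \<omega> + B \<omega>) / 2 - m)\<^sup>2)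
      \<le> expectation (\<lambda>\<omega>. ((A \<omega> - m)\<^sup>2 + (B \<omega> - m)\<^sup>2) / 2)"
    using avg_var A_var B_var convex by (intro integral_mono) auto
  also have "\<dots> = expectation (\<lambda>\<omega>. (A \<omega> - m)\<^sup>2)"
    using A_var B_var B_var_eq by simp
  finally show "expectation (\<lambda>\<omega>. ((A \<omega> + B \<omega>) / 2 - expectation (\<lambda>\<omega>. (A \<omega> + B \<omega>) / 2))\<^sup>2)
      \<le> expectation (\<lambda>\<omega>. (A \<omega> - expectation A)\<^sup>2)"
    unfolding mean m_def .
qed

lemma borel_measurable_pros_kde:
  assumes X_rv: "\<And>j i. j \<in> {1..n} \<Longrightarrow> i \<in> {1..L} \<Longrightarrow> X j i \<in> borel_measurable M"
    and K_meas: "K \<in> borel_measurable borel"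
  shows "pros_kde n L h K X x \<in> borel_measurable M"
  unfolding pros_kde_def using X_rv K_meas by (intro borel_measurable_times borel_measurable_sum) auto

lemma integrable_square_pros_kde:
  assumes X_rv: "\<And>j i. j \<in> {1..n} \<Longrightarrow> i \<in> {1..L} \<Longrightarrow> X j i \<in> borel_measurable M"
    and K_meas: "K \<in> borel_measurable borel"
    and fin_var: "\<And>j i. j \<in> {1..n} \<Longrightarrow> i \<in> {1..L} \<Longrightarrow>
         integrable M (\<lambda>\<omega>. (K ((x - X j i \<omega>) / h))\<^sup>2)"
  shows "integrable M (\<lambda>\<omega>. (pros_kde n L h K X x \<omega>)\<^sup>2)"
proof -
  have "(\<lambda>\<omega>. K ((x - X (fst p) (snd p) \<omega>) / h)) \<in> borel_measurable M"
    if "p \<in> {1..n} \<times> {1..L}" for p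
    using that X_rv[of "fst p" "snd p"] K_meas by auto
  then show ?thesis
    unfolding pros_kde_eq_sum_pairs power_mult_distrib
    using fin_var by (intro integrable_mult_right integrable_square_sum) auto
qed

lemma (in prob_space) pros_kde_reflect_equidistributed:
  assumes n: "0 < n" "n dvd s" and L: "0 < L"
    and f_meas: "f \<in> borel_measurable borel"
    and f_int: "integrable lborel f" "integral\<^sup>L lborel f = 1"
    and F_def: "\<And>t. F t = (LINT y:{..t}|lborel. f y)"
    and f_sym: "\<And>t. f t = f (2 * \<mu> - t)"
    and \<alpha>_sym: "\<And>j k. j \<in> {1..n} \<Longrightarrow> k \<in> {1..n} \<Longrightarrow> \<alpha> j k = \<alpha> (n - j + 1) (n - k + 1)"
    and K_meas: "K \<in> borel_measurable borel" and K_sym: "\<And>u. K (- u) = K u"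
    and X_indep: "indep_vars (\<lambda>_. borel) (\<lambda>p. X (fst p) (snd p)) ({1..n} \<times> {1..L})"
    and X_distr: "\<And>j i. j \<in> {1..n} \<Longrightarrow> i \<in> {1..L} \<Longrightarrow>
         distributed M lborel (X j i) (\<lambda>t. ennreal (pros_density s n \<alpha> F f j t))"
  shows "distr M borel (pros_kde n L h K X x) = distr M borel (pros_kde n L h K X (2 * \<mu> - x))"
proof -
  note [measurable] = K_meas
  define I where "I = {1..n} \<times> {1..L}"
  define Z where "Z p = X (fst p) (snd p)" for p
  define \<sigma> where "\<sigma> p = (n - fst p + 1, snd p)" for p :: "nat \<times> nat"
  define c where "c = 1 / (real n * real L * h)"
  have kde: "pros_kde n L h K X y = (\<lambda>\<omega>. c * (\<Sum>p\<in>I. K ((y - Z p \<omega>) / h)))" for y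
    unfolding pros_kde_eq_sum_pairs c_def I_def Z_def ..
  have Z_rv[measurable]: "Z p \<in> borel_measurable M" if "p \<in> I" for p
    using that X_distr by (auto simp: I_def Z_def distributed_def)
  have \<sigma>_bij: "bij_betw \<sigma> I I"
    unfolding I_def by (rule bij_betw_byWitness[where f'=\<sigma>]) (auto simp: \<sigma>_def)
  have Z_reflect: "distr M borel (\<lambda>\<omega>. 2 * \<mu> - Z p \<omega>) = distr M borel (Z (\<sigma> p))" if "p \<in> I" for p
    using that pros_density_reflect[where F=F and f=f and \<mu>=\<mu> and n=n and s=s and \<alpha>=\<alpha>,
        OF cdf_reflect[OF f_meas f_int F_def f_sym] f_sym n(2) \<alpha>_sym]
    by (auto simp: I_def Z_def \<sigma>_def intro!: distr_reflect_eq_distributed[OF X_distr X_distr])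
  have "distr M borel (\<lambda>\<omega>. \<Sum>p\<in>I. K ((x - Z p \<omega>) / h))
      = distr M borel (\<lambda>\<omega>. \<Sum>p\<in>I. K ((2 * \<mu> - x - Z p \<omega>) / h))"
    using n L X_indep K_meas K_sym \<sigma>_bij Z_reflect
    by (intro distr_kernel_sum_reflect[symmetric]) (auto simp: I_def Z_def)
  then show ?thesis
    unfolding kde by (rule distr_eq_compose) measurable
qed

theorem theorem3p4:
  fixes M :: "'a measure" and X :: "nat \<Rightarrow> nat \<Rightarrow> 'a \<Rightarrow> real"
    and f F K :: "real \<Rightarrow> real" and \<alpha> :: "nat \<Rightarrow> nat \<Rightarrow> real"
    and s n L :: nat and h \<mu> x :: real
  assumes M: "prob_space M"
    and snL: "0 < s" "0 < n" "0 < L" "n dvd s"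
    and f_meas: "f \<in> borel_measurable borel"
    and f_nonneg: "\<And>t. 0 \<le> f t"
    and f_int: "integrable lborel f" "integral\<^sup>L lborel f = 1"
    and F_def: "\<And>t. F t = (LINT y:{..t}|lborel. f y)"
    and f_sym: "\<And>t. f t = f (2 * \<mu> - t)"
    and ds: "doubly_stochastic n \<alpha>"
    and \<alpha>_sym: "\<And>j k. j \<in> {1..n} \<Longrightarrow> k \<in> {1..n} \<Longrightarrow> \<alpha> j k = \<alpha> (n - j + 1) (n - k + 1)"
    and K_meas: "K \<in> borel_measurable borel"
    and K_sym: "\<And>u. K (- u) = K u"
    and K_int: "integrable lborel K" "integral\<^sup>L lborel K = 1"
    and K_sq: "integrable lborel (\<lambda>u. (K u)\<^sup>2)"
    and K_mom: "integrable lborel (\<lambda>u. u\<^sup>2 * K u)"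
    and h_pos: "0 < h"
    and X_indep: "prob_space.indep_vars M (\<lambda>_. borel) (\<lambda>p. X (fst p) (snd p)) ({1..n} \<times> {1..L})"
    and X_distr: "\<And>j i. j \<in> {1..n} \<Longrightarrow> i \<in> {1..L} \<Longrightarrow>
         distributed M lborel (X j i) (\<lambda>t. ennreal (pros_density s n \<alpha> F f j t))"
    and fin_var: "\<And>j i. j \<in> {1..n} \<Longrightarrow> i \<in> {1..L} \<Longrightarrow>
         integrable M (\<lambda>\<omega>. (K ((x - X j i \<omega>) / h))\<^sup>2)"
  shows "integral\<^sup>L M (pros_kde_sym n L h K X x \<mu>) = integral\<^sup>L M (pros_kde n L h K X x)
         \<and> integral\<^sup>L M (\<lambda>\<omega>. (pros_kde_sym n L h K X x \<mu> \<omega>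
              - integral\<^sup>L M (pros_kde_sym n L h K X x \<mu>))\<^sup>2)
         \<le> integral\<^sup>L M (\<lambda>\<omega>. (pros_kde n L h K X x \<omega>
              - integral\<^sup>L M (pros_kde n L h K X x))\<^sup>2)"
proof -
  interpret prob_space M by (rule M)
  have X_rv: "X j i \<in> borel_measurable M" if "j \<in> {1..n}" "i \<in> {1..L}" for j i
    using X_distr[OF that] by (simp add: distributed_def)
  have equidistributed: "distr M borel (pros_kde n L h K X x)
      = distr M borel (pros_kde n L h K X (2 * \<mu> - x))"
    using X_indep by (intro pros_kde_reflect_equidistributed[OF snL(2,4,3) f_meas f_int F_def f_sym
        \<alpha>_sym K_meas K_sym _ X_distr])
  note kde_rv = borel_measurable_pros_kde[OF X_rv K_meas]
  from expectation_variance_average_of_equidistributed[OF kde_rv kde_rv equidistributed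
      integrable_square_pros_kde[OF X_rv K_meas fin_var]]
  show ?thesis
    unfolding pros_kde_sym_def[abs_def] by blast
qed

end
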